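(* Let $U\subset\mathbb{R}^m$ be open and let $L=\{u\in\mathcal{DM}_\infty(U)\cap C_\infty(U;\mathbb R^m):\operatorname{div}u\in L_1(U)\cap C_b(U)\}$. For $f\in L_1(U)$ put $$|f|_{BF(U)}=\sup\Big\{\int_U f\,\operatorname{div}u\,\mathrm dx: u\in L,\ \|u\|_\infty\le1\Big\}.$$ If $(f_\alpha)$ is a net in $L_1(U)$ converging to $f\in L_1(U)$ in $L_1(V)$ for every bounded subset $V\subset U$, then $|f|_{BF(U)}\le\liminf_\alpha|f_\alpha|_{BF(U)}$.
   Context: $\mathcal{DM}_\infty(U)=\{u\in L_\infty(U;\mathbb{R}^m):\operatorname{div}u \text{ is a finite signed Radon measure on } U\}$ (distributional divergence). $C_b(U)$ denotes bounded continuous functions. *)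

theory Defs
  imports "HOL-Analysis.Analysis"
begin

fun Ck_on :: "nat \<Rightarrow> 'a::euclidean_space set \<Rightarrow> ('a \<Rightarrow> 'b::real_normed_vector) \<Rightarrow> bool" where
  "Ck_on 0 U g = continuous_on U g"
| "Ck_on (Suc k) U g = ((\<forall>x\<in>U. g differentiable (at x)) \<and>
      (\<forall>b\<in>Basis. Ck_on k U (\<lambda>x. frechet_derivative g (at x) b)))"

definition smooth_on :: "'a::euclidean_space set \<Rightarrow> ('a \<Rightarrow> 'b::real_normed_vector) \<Rightarrow> bool" where
  "smooth_on U g \<longleftrightarrow> (\<forall>k. Ck_on k U g)"

definition divergence :: "('a::euclidean_space \<Rightarrow> 'a) \<Rightarrow> 'a \<Rightarrow> real" where
  "divergence u x = (\<Sum>b\<in>Basis. frechet_derivative u (at x) b \<bullet> b)"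

definition test_fun :: "'a::euclidean_space set \<Rightarrow> ('a \<Rightarrow> real) \<Rightarrow> bool" where
  "test_fun U \<phi> \<longleftrightarrow> smooth_on UNIV \<phi> \<and> compact (closure {x. \<phi> x \<noteq> 0}) \<and>
      closure {x. \<phi> x \<noteq> 0} \<subseteq> U"

text \<open>DM_infinity(U): essentially bounded measurable fields whose distributional divergence is a
  finite signed Radon measure on U (written as a difference of two finite Borel measures on U;
  finite Borel measures on open subsets of R^m are Radon).\<close>
definition DM_inf :: "'a::euclidean_space set \<Rightarrow> ('a \<Rightarrow> 'a) \<Rightarrow> bool" where
  "DM_inf U u \<longleftrightarrow>
     u \<in> borel_measurable (restrict_space lebesgue U) \<and>
     (\<exists>C. AE x in lebesgue. x \<in> U \<longrightarrow> norm (u x) \<le> C) \<and>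
     (\<exists>\<mu> \<nu>. finite_measure \<mu> \<and> finite_measure \<nu> \<and>
        sets \<mu> = sets (restrict_space borel U) \<and> sets \<nu> = sets (restrict_space borel U) \<and>
        (\<forall>\<phi>. test_fun U \<phi> \<longrightarrow>
           (LINT x:U|lebesgue. frechet_derivative \<phi> (at x) (u x))
             = - ((\<integral>x. \<phi> x \<partial>\<mu>) - (\<integral>x. \<phi> x \<partial>\<nu>))))"

definition L_fields :: "'a::euclidean_space set \<Rightarrow> ('a \<Rightarrow> 'a) set" where
  "L_fields U = {u. DM_inf U u \<and> smooth_on U u \<and>
      set_integrable lebesgue U (divergence u) \<and>
      continuous_on U (divergence u) \<and> bounded (divergence u ` U)}"

text \<open>The BF(U) seminorm (value in extended reals, may be infinite).
  For continuous u, the L-infinity norm on the open set U is the pointwise supremum.\<close>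
definition BF_norm :: "'a::euclidean_space set \<Rightarrow> ('a \<Rightarrow> real) \<Rightarrow> ereal" where
  "BF_norm U f = (SUP u\<in>{u\<in>L_fields U. \<forall>x\<in>U. norm (u x) \<le> 1}.
                    ereal (LINT x:U|lebesgue. f x * divergence u x))"

definition directed_set :: "'i set \<Rightarrow> ('i \<Rightarrow> 'i \<Rightarrow> bool) \<Rightarrow> bool" where
  "directed_set I R \<longleftrightarrow> I \<noteq> {} \<and> (\<forall>a\<in>I. R a a) \<and>
     (\<forall>a\<in>I. \<forall>b\<in>I. \<forall>c\<in>I. R a b \<longrightarrow> R b c \<longrightarrow> R a c) \<and>
     (\<forall>a\<in>I. \<forall>b\<in>I. \<exists>c\<in>I. R a c \<and> R b c)"

definition net_liminf :: "'i set \<Rightarrow> ('i \<Rightarrow> 'i \<Rightarrow> bool) \<Rightarrow> ('i \<Rightarrow> ereal) \<Rightarrow> ereal" where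
  "net_liminf I R x = (SUP a\<in>I. INF b\<in>{b\<in>I. R a b}. x b)"

end

theory Submission
  imports Defs "HOL-Computational_Algebra.Polynomial"
begin

text \<open>Let \<open>u \<in> L\<close> with \<open>\<bar>u\<bar> \<le> 1\<close>. Multiplying \<open>u\<close> by a smooth radial cutoff \<open>\<chi>(c\<bar>x\<bar>\<^sup>2)\<close>
  gives fields \<open>u\<^sub>c\<close> that are still in \<open>L\<close> with \<open>\<bar>u\<^sub>c\<bar> \<le> 1\<close> (membership in \<open>DM\<^sub>\<infinity>\<close> comes
  from integrating by parts against test functions), whose divergences are bounded uniformly in
  \<open>c \<le> 1\<close> and vanish outside a ball. By dominated convergence \<open>\<integral> f div u\<^sub>c \<rightarrow> \<integral> f div u\<close> as
  \<open>c \<rightarrow> 0\<close>. For fixed \<open>c\<close>, \<open>\<integral> F\<^sub>\<alpha> div u\<^sub>c \<rightarrow> \<integral> f div u\<^sub>c\<close> along the net because the weight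
  \<open>div u\<^sub>c\<close> is bounded and supported in a bounded set, where \<open>F\<^sub>\<alpha> \<rightarrow> f\<close> in \<open>L\<^sub>1\<close>. Hence
  \<open>\<integral> f div u \<le> liminf\<^sub>\<alpha> |F\<^sub>\<alpha>|\<^sub>B\<^sub>F\<close>, and the supremum over \<open>u\<close> gives the claim.\<close>

section \<open>Calculus of the classes \<open>C\<^sup>k\<close>\<close>

lemma Ck_on_SucD: "Ck_on (Suc k) U g \<Longrightarrow> Ck_on k U g"
proof (induction k arbitrary: g)
  case 0
  then show ?case
    by (auto intro!: continuous_at_imp_continuous_on differentiable_imp_continuous_within)
qed simp

lemma Ck_on_subset: "Ck_on k U g \<Longrightarrow> V \<subseteq> U \<Longrightarrow> Ck_on k V g"
  by (induction k arbitrary: g) (auto intro: continuous_on_subset)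

lemma smooth_onD: "smooth_on U g \<Longrightarrow> Ck_on k U g"
  by (simp add: smooth_on_def)

lemma smooth_on_has_derivative:
  "smooth_on U g \<Longrightarrow> x \<in> U \<Longrightarrow> (g has_derivative frechet_derivative g (at x)) (at x)"
  using smooth_onD[of U g 1] by (simp add: frechet_derivative_works[symmetric])

lemma smooth_on_continuous_on: "smooth_on U g \<Longrightarrow> continuous_on U g"
  using smooth_onD[of U g 0] by simp

lemma smooth_on_continuous_on_partial:
  "smooth_on U g \<Longrightarrow> b \<in> Basis \<Longrightarrow> continuous_on U (\<lambda>x. frechet_derivative g (at x) b)"
  using smooth_onD[of U g 1] by simp

lemma Ck_on_cong:
  assumes "open U" "\<And>x. x \<in> U \<Longrightarrow> g x = h x" "Ck_on k U g"
  shows "Ck_on k U h"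
  using assms(2,3)
proof (induction k arbitrary: g h)
  case 0
  then show ?case using continuous_on_cong by auto
next
  case (Suc k)
  have g_diff: "g differentiable at x" if "x \<in> U" for x
    using Suc.prems(2) that by simp
  have "(h has_derivative frechet_derivative g (at x)) (at x)" if "x \<in> U" for x
    using g_diff[OF that] assms(1) that Suc.prems(1)
    by (intro has_derivative_transform_within_open[of g _ x UNIV U h])
      (auto simp: frechet_derivative_works[symmetric])
  then have h_diff: "h differentiable at x" and
    D_eq: "frechet_derivative g (at x) = frechet_derivative h (at x)" if "x \<in> U" for x
    using that by (auto intro: differentiableI frechet_derivative_at)
  have "Ck_on k U (\<lambda>x. frechet_derivative h (at x) b)" if "b \<in> Basis" for b
  proof (rule Suc.IH)
    show "Ck_on k U (\<lambda>x. frechet_derivative g (at x) b)"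
      using Suc.prems(2) that by simp
  qed (simp add: D_eq)
  then show ?case
    using h_diff by simp
qed

lemma Ck_on_const: "Ck_on k U (\<lambda>x. c)"
  by (induction k arbitrary: c) simp_all

lemma Ck_on_add:
  assumes "open U" "Ck_on k U g" "Ck_on k U h"
  shows "Ck_on k U (\<lambda>x. g x + h x)"
  using assms(2,3)
proof (induction k arbitrary: g h)
  case 0
  then show ?case by (auto intro: continuous_on_add)
next
  case (Suc k)
  have D_add: "frechet_derivative (\<lambda>x. g x + h x) (at x) b =
      frechet_derivative g (at x) b + frechet_derivative h (at x) b" if "x \<in> U" for x b
  proof -
    have "(g has_derivative frechet_derivative g (at x)) (at x)"
      "(h has_derivative frechet_derivative h (at x)) (at x)"
      using Suc.prems that by (simp_all add: frechet_derivative_works[symmetric])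
    then have "((\<lambda>x. g x + h x) has_derivative
        (\<lambda>v. frechet_derivative g (at x) v + frechet_derivative h (at x) v)) (at x)"
      by (rule has_derivative_add)
    from fun_cong[OF frechet_derivative_at[OF this], of b] show ?thesis
      by simp
  qed
  have Ck_sum: "Ck_on k U (\<lambda>x. frechet_derivative g (at x) b + frechet_derivative h (at x) b)"
    if "b \<in> Basis" for b
    using Suc.prems that by (intro Suc.IH) auto
  have "Ck_on k U (\<lambda>x. frechet_derivative (\<lambda>x. g x + h x) (at x) b)" if "b \<in> Basis" for b
    by (rule Ck_on_cong[OF assms(1) _ Ck_sum[OF that]]) (simp add: D_add)
  then show ?case
    using Suc.prems by (simp add: differentiable_add)
qed

lemma Ck_on_scaleR:
  assumes "open U" "Ck_on k U \<psi>" "Ck_on k U u"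
  shows "Ck_on k U (\<lambda>x. \<psi> x *\<^sub>R u x)"
  using assms(2,3)
proof (induction k arbitrary: \<psi> u)
  case 0
  then show ?case by (auto intro: continuous_on_scaleR)
next
  case (Suc k)
  have D_scaleR: "frechet_derivative (\<lambda>x. \<psi> x *\<^sub>R u x) (at x) b =
      \<psi> x *\<^sub>R frechet_derivative u (at x) b + frechet_derivative \<psi> (at x) b *\<^sub>R u x"
    if "x \<in> U" for x b
  proof -
    have "(\<psi> has_derivative frechet_derivative \<psi> (at x)) (at x)"
      "(u has_derivative frechet_derivative u (at x)) (at x)"
      using Suc.prems that by (simp_all add: frechet_derivative_works[symmetric])
    then have "((\<lambda>x. \<psi> x *\<^sub>R u x) has_derivative
        (\<lambda>v. \<psi> x *\<^sub>R frechet_derivative u (at x) v + frechet_derivative \<psi> (at x) v *\<^sub>R u x)) (at x)"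
      by (rule has_derivative_scaleR)
    from fun_cong[OF frechet_derivative_at[OF this], of b] show ?thesis
      by simp
  qed
  have Ck_product_rule: "Ck_on k U (\<lambda>x. \<psi> x *\<^sub>R frechet_derivative u (at x) b
      + frechet_derivative \<psi> (at x) b *\<^sub>R u x)" if "b \<in> Basis" for b
    using Suc.prems that Ck_on_SucD[OF Suc.prems(1)] Ck_on_SucD[OF Suc.prems(2)]
    by (intro Ck_on_add[OF assms(1)] Suc.IH) auto
  have "Ck_on k U (\<lambda>x. frechet_derivative (\<lambda>x. \<psi> x *\<^sub>R u x) (at x) b)" if "b \<in> Basis" for b
    by (rule Ck_on_cong[OF assms(1) _ Ck_product_rule[OF that]]) (simp add: D_scaleR)
  then show ?case
    using Suc.prems by (simp add: differentiable_scaleR)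
qed

lemma Ck_on_bounded_linear:
  assumes "bounded_linear f"
  shows "Ck_on k U f"
proof (cases k)
  case 0
  then show ?thesis using assms by (auto intro: linear_continuous_on)
next
  case (Suc n)
  have "frechet_derivative f (at x) = f" for x
    using assms by (metis bounded_linear_imp_has_derivative frechet_derivative_at)
  then show ?thesis using Suc assms
    by (auto simp: Ck_on_const intro: bounded_linear_imp_differentiable)
qed

section \<open>A smooth radial cutoff\<close>

definition higher_derivatives :: "(nat \<Rightarrow> real \<Rightarrow> real) \<Rightarrow> bool" where
  "higher_derivatives D \<longleftrightarrow> (\<forall>n t. (D n has_real_derivative D (Suc n) t) (at t))"

lemma has_derivative_radial:
  fixes x :: "'a::euclidean_space"
  assumes "higher_derivatives D"
  shows "((\<lambda>x. D 0 (c * (x \<bullet> x))) has_derivative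
           (\<lambda>h. (2 * c * (x \<bullet> h)) * D 1 (c * (x \<bullet> x)))) (at x)"
proof -
  have "((\<lambda>x. c * (x \<bullet> x)) has_derivative (\<lambda>h. c * (x \<bullet> h + h \<bullet> x))) (at x)"
    by (intro has_derivative_mult_right has_derivative_inner has_derivative_ident)
  then have "((\<lambda>x. c * (x \<bullet> x)) has_derivative (\<lambda>h. 2 * c * (x \<bullet> h))) (at x)"
    by (simp add: inner_commute algebra_simps)
  moreover have "(D 0 has_real_derivative D 1 (c * (x \<bullet> x))) (at (c * (x \<bullet> x)))"
    using assms unfolding higher_derivatives_def by simp
  ultimately show ?thesis
    by (rule DERIV_compose_FDERIV[rotated])
qed

lemma Ck_on_radial:
  assumes "higher_derivatives D"
  shows "Ck_on k (UNIV::'a::euclidean_space set) (\<lambda>x. D 0 (c * (x \<bullet> x)))"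
  using assms
proof (induction k arbitrary: D)
  case 0
  have "isCont (\<lambda>x::'a. D 0 (c * (x \<bullet> x))) x" for x
    using has_derivative_radial[OF 0] has_derivative_continuous by blast
  then show ?case
    by (simp add: continuous_at_imp_continuous_on)
next
  case (Suc k)
  have partial: "frechet_derivative (\<lambda>x::'a. D 0 (c * (x \<bullet> x))) (at x) =
      (\<lambda>b. (2 * c * (x \<bullet> b)) *\<^sub>R D 1 (c * (x \<bullet> x)))" for x
    using frechet_derivative_at[OF has_derivative_radial[OF Suc.prems, of c x]] by simp
  have "higher_derivatives (\<lambda>n. D (Suc n))"
    using Suc.prems by (simp add: higher_derivatives_def)
  then have D1: "Ck_on k UNIV (\<lambda>x::'a. D 1 (c * (x \<bullet> x)))"
    using Suc.IH by simp
  have lin: "bounded_linear (\<lambda>x::'a. 2 * c * (x \<bullet> b))" for b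
    by (intro bounded_linear_const_mult bounded_linear_inner_left)
  show ?case
    unfolding Ck_on.simps partial
  proof (intro conjI ballI)
    show "(\<lambda>x::'a. D 0 (c * (x \<bullet> x))) differentiable at x" for x
      using has_derivative_radial[OF Suc.prems] by (rule differentiableI)
    show "Ck_on k UNIV (\<lambda>x::'a. (2 * c * (x \<bullet> b)) *\<^sub>R D 1 (c * (x \<bullet> x)))" for b
      by (rule Ck_on_scaleR[OF open_UNIV Ck_on_bounded_linear[OF lin] D1])
  qed
qed

text \<open>\<open>flat_exp_deriv n\<close> is the \<open>n\<close>-th derivative of \<open>t \<mapsto> exp (-1/t)\<close> (extended by \<open>0\<close>
  for \<open>t \<le> 0\<close>); differentiating \<open>p (1/t) exp (-1/t)\<close> gives \<open>q (1/t) exp (-1/t)\<close> with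
  \<open>q(s) = s\<^sup>2 (p(s) - p'(s))\<close>.\<close>

primrec flat_exp_poly :: "nat \<Rightarrow> real poly" where
  "flat_exp_poly 0 = 1"
| "flat_exp_poly (Suc n) = [:0,0,1:] * (flat_exp_poly n - pderiv (flat_exp_poly n))"

definition flat_exp_deriv :: "nat \<Rightarrow> real \<Rightarrow> real" where
  "flat_exp_deriv n t = (if 0 < t then poly (flat_exp_poly n) (inverse t) * exp (- inverse t) else 0)"

lemma poly_times_exp_neg_tendsto_0: "((\<lambda>s. poly p s * exp (-s)) \<longlongrightarrow> (0::real)) at_top"
proof -
  have "poly p s * exp (-s) = (\<Sum>i\<le>degree p. coeff p i * s ^ i) / exp s" for s :: real
    by (simp add: poly_altdef exp_minus divide_inverse)
  then have "poly p s * exp (-s) = (\<Sum>i\<le>degree p. coeff p i * (s ^ i / exp s))" for s :: real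
    by (simp add: sum_divide_distrib)
  moreover have "((\<lambda>s. \<Sum>i\<le>degree p. coeff p i * (s ^ i / exp s)) \<longlongrightarrow> (0::real)) at_top"
    by (intro tendsto_null_sum tendsto_mult_right_zero tendsto_power_div_exp_0)
  ultimately show ?thesis by simp
qed

lemma poly_inverse_times_exp_tendsto_0:
  "((\<lambda>t. poly p (inverse t) * exp (- inverse t)) \<longlongrightarrow> (0::real)) (at_right 0)"
  using filterlim_compose[OF poly_times_exp_neg_tendsto_0 filterlim_inverse_at_top_right] by simp

lemma has_real_derivative_poly_inverse_times_exp:
  assumes "0 < t"
  shows "((\<lambda>t. poly p (inverse t) * exp (- inverse t)) has_real_derivative
      poly ([:0,0,1:] * (p - pderiv p)) (inverse t) * exp (- inverse t)) (at t)"
proof -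
  have t: "t \<noteq> 0" using assms by simp
  have "((\<lambda>t. poly p (inverse t)) has_real_derivative
      poly (pderiv p) (inverse t) * (- (inverse t ^ Suc (Suc 0)))) (at t)"
    by (rule DERIV_chain2[OF poly_DERIV DERIV_inverse[OF t]])
  moreover have "((\<lambda>t. exp (- inverse t)) has_real_derivative
      exp (- inverse t) * (- (- (inverse t ^ Suc (Suc 0))))) (at t)"
    by (rule DERIV_chain2[OF DERIV_exp DERIV_minus[OF DERIV_inverse[OF t]]])
  ultimately have "((\<lambda>t. poly p (inverse t) * exp (- inverse t)) has_real_derivative
      poly (pderiv p) (inverse t) * (- (inverse t ^ Suc (Suc 0))) * exp (- inverse t) +
      exp (- inverse t) * (- (- (inverse t ^ Suc (Suc 0)))) * poly p (inverse t)) (at t)"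
    by (rule DERIV_mult)
  then show ?thesis
    by (simp add: algebra_simps power2_eq_square)
qed

lemma higher_derivatives_flat_exp: "higher_derivatives flat_exp_deriv"
  unfolding higher_derivatives_def
proof (intro allI)
  fix n and t :: real
  consider "0 < t" | "t < 0" | "t = 0" by linarith
  then show "(flat_exp_deriv n has_real_derivative flat_exp_deriv (Suc n) t) (at t)"
  proof cases
    case 1
    have "((\<lambda>t. poly (flat_exp_poly n) (inverse t) * exp (- inverse t)) has_real_derivative
        flat_exp_deriv (Suc n) t) (at t)"
      using has_real_derivative_poly_inverse_times_exp[OF 1] 1 by (simp add: flat_exp_deriv_def)
    then show ?thesis
      by (rule has_field_derivative_transform_within_open[where S="{0<..}"])
        (use 1 in \<open>auto simp: flat_exp_deriv_def\<close>)
  next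
    case 2
    have "((\<lambda>t. 0) has_real_derivative flat_exp_deriv (Suc n) t) (at t)"
      using 2 by (simp add: flat_exp_deriv_def)
    then show ?thesis
      by (rule has_field_derivative_transform_within_open[where S="{..<0}"])
        (use 2 in \<open>auto simp: flat_exp_deriv_def\<close>)
  next
    case 3
    have "eventually (\<lambda>y. y \<in> {-1<..<0}) (at_left (0::real))"
      by (rule eventually_at_left_real) simp
    then have "\<forall>\<^sub>F y in at_left 0. 0 = flat_exp_deriv n y / y"
      by eventually_elim (simp add: flat_exp_deriv_def)
    then have "((\<lambda>y. flat_exp_deriv n y / y) \<longlongrightarrow> 0) (at_left 0)"
      by (rule Lim_transform_eventually[OF tendsto_const])
    moreover have "\<forall>\<^sub>F y in at_right 0. poly (pCons 0 (flat_exp_poly n)) (inverse y) * exp (- inverse y)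
        = flat_exp_deriv n y / y"
      using eventually_at_right_less[of 0]
      by eventually_elim (simp add: flat_exp_deriv_def field_simps)
    then have "((\<lambda>y. flat_exp_deriv n y / y) \<longlongrightarrow> 0) (at_right 0)"
      by (rule Lim_transform_eventually[OF poly_inverse_times_exp_tendsto_0])
    ultimately have "((\<lambda>y. (flat_exp_deriv n y - flat_exp_deriv n 0) / (y - 0)) \<longlongrightarrow> 0) (at 0)"
      by (simp add: filterlim_at_split flat_exp_deriv_def)
    then show ?thesis
      using 3 by (simp add: has_field_derivative_iff flat_exp_deriv_def)
  qed
qed

text \<open>\<open>bump 0 s = e \<cdot> exp (-1/(1 - s))\<close> for \<open>s < 1\<close> and \<open>0\<close> for \<open>s \<ge> 1\<close>; \<open>bump n\<close> is its
  \<open>n\<close>-th derivative.\<close>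

definition bump :: "nat \<Rightarrow> real \<Rightarrow> real" where
  "bump n s = (-1) ^ n * exp 1 * flat_exp_deriv n (1 - s)"

lemma higher_derivatives_bump: "higher_derivatives bump"
  unfolding higher_derivatives_def
proof (intro allI)
  fix n t
  have "((\<lambda>s. flat_exp_deriv n (1 - s)) has_real_derivative flat_exp_deriv (Suc n) (1 - t) * (- 1)) (at t)"
    using higher_derivatives_flat_exp unfolding higher_derivatives_def
    by (intro DERIV_chain2[where f="flat_exp_deriv n"]) (auto intro!: derivative_eq_intros)
  then show "(bump n has_real_derivative bump (Suc n) t) (at t)"
    unfolding bump_def by (auto intro!: derivative_eq_intros simp: algebra_simps)
qed

lemma bump_eq_0: "1 \<le> s \<Longrightarrow> bump n s = 0"
  by (simp add: bump_def flat_exp_deriv_def)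

lemma bump_0_0: "bump 0 0 = 1"
  by (simp add: bump_def flat_exp_deriv_def exp_minus)

lemma bump_0_bounds:
  assumes "0 \<le> s"
  shows "0 \<le> bump 0 s \<and> bump 0 s \<le> 1"
proof (cases "s < 1")
  case True
  have "1 \<le> inverse (1 - s)"
    using assms True by (intro one_le_inverse) auto
  then have "exp (1 - inverse (1 - s)) \<le> exp 0"
    by simp
  then show ?thesis
    using True by (simp add: bump_def flat_exp_deriv_def exp_diff exp_minus field_simps)
qed (simp add: bump_eq_0)

lemma isCont_bump: "isCont (bump n) s"
  using higher_derivatives_bump unfolding higher_derivatives_def by (meson DERIV_isCont)

lemma bump_1_bounded: "\<exists>B. \<forall>s\<ge>0. \<bar>bump 1 s\<bar> \<le> B"
proof -
  have "continuous_on {0..1} (bump 1)"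
    by (simp add: isCont_bump continuous_at_imp_continuous_on)
  then have "bounded (bump 1 ` {0..1})"
    by (intro compact_imp_bounded compact_continuous_image) auto
  then obtain B where B: "\<forall>y\<in>bump 1 ` {0..1}. norm y \<le> B"
    unfolding bounded_iff by blast
  then have B_nonneg: "0 \<le> B"
    using bump_eq_0[of 1 1] by force
  have "\<bar>bump 1 s\<bar> \<le> B" if "0 \<le> s" for s
    using that B B_nonneg bump_eq_0[of s 1] by (cases "s \<le> 1") auto
  then show ?thesis by blast
qed

section \<open>Integration by parts against test functions\<close>

lemma bounded_vanishing_outside_compact:
  fixes g :: "'a::topological_space \<Rightarrow> real"
  assumes "continuous_on UNIV g" "compact K" "\<And>x. x \<notin> K \<Longrightarrow> g x = 0"
  obtains M where "\<And>x. \<bar>g x\<bar> \<le> M"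
proof -
  have "bounded (g ` K)"
    by (intro compact_imp_bounded compact_continuous_image continuous_on_subset[OF assms(1)] assms(2)) auto
  then obtain M where M: "\<forall>y\<in>g ` K. norm y \<le> M"
    unfolding bounded_iff by blast
  have "\<bar>g x\<bar> \<le> max M 0" for x
    using M assms(3)[of x] by (cases "x \<in> K") auto
  then show ?thesis using that by blast
qed

lemma integrable_vanishing_outside_compact:
  fixes g :: "'a::euclidean_space \<Rightarrow> real"
  assumes "continuous_on UNIV g" "compact K" "\<And>x. x \<notin> K \<Longrightarrow> g x = 0"
  shows "integrable lborel g"
proof -
  have "g = (\<lambda>x. indicator K x *\<^sub>R g x)"
    using assms(3) by (auto simp: indicator_def fun_eq_iff)
  then show ?thesis
    using borel_integrable_compact[OF assms(2) continuous_on_subset[OF assms(1)]] by auto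
qed

lemma continuous_on_UNIV_vanishing_outside:
  assumes "open U" "closed K" "K \<subseteq> U" "continuous_on U g" "\<And>x. x \<notin> K \<Longrightarrow> g x = 0"
  shows "continuous_on UNIV g"
proof -
  have "continuous_on (- K) g"
    using assms(5) by (intro continuous_on_eq[OF continuous_on_const]) auto
  moreover have "U \<union> - K = UNIV"
    using assms(3) by auto
  ultimately show ?thesis
    using continuous_on_open_Un[OF assms(1) _ assms(4)] assms(2) by (metis open_Compl)
qed

lemma has_derivative_locally_zero:
  assumes "(h has_derivative H) (at x)" "open S" "x \<in> S" "\<And>y. y \<in> S \<Longrightarrow> h y = 0"
  shows "H = (\<lambda>v. 0)"
proof -
  have "((\<lambda>_. 0) has_derivative H) (at x)"
    by (rule has_derivative_transform_within_open[OF assms(1-3)]) (use assms(4) in auto)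
  then show ?thesis
    using has_derivative_unique has_derivative_const by blast
qed

lemma lborel_integral_translate:
  fixes h :: "'a::euclidean_space \<Rightarrow> real"
  assumes "integrable lborel h"
  shows "integrable lborel (\<lambda>x. h (x + c))" "(\<integral>x. h (x + c) \<partial>lborel) = integral\<^sup>L lborel h"
proof -
  have h_meas: "h \<in> borel_measurable borel"
    using assms by auto
  have "integrable (distr lborel borel ((+) c)) h"
    using assms by (simp add: lborel_distr_plus)
  then show "integrable lborel (\<lambda>x. h (x + c))"
    by (subst (asm) integrable_distr_eq) (auto simp: h_meas add.commute)
  show "(\<integral>x. h (x + c) \<partial>lborel) = integral\<^sup>L lborel h"
    using integral_distr[of "(+) c" lborel borel h] h_meas
    by (simp add: lborel_distr_plus add.commute)
qed

lemma has_real_derivative_along_line: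
  fixes h :: "'a::real_normed_vector \<Rightarrow> real"
  assumes "(h has_derivative H) (at (x + s *\<^sub>R b))"
  shows "((\<lambda>s. h (x + s *\<^sub>R b)) has_real_derivative H b) (at s)"
proof -
  have "((\<lambda>s. x + s *\<^sub>R b) has_derivative (\<lambda>s. s *\<^sub>R b)) (at s)"
    by (auto intro!: derivative_eq_intros)
  then have "((\<lambda>s. h (x + s *\<^sub>R b)) has_derivative (\<lambda>s'. H (s' *\<^sub>R b))) (at s)"
    using assms by (rule has_derivative_compose)
  moreover have "(\<lambda>s'. H (s' *\<^sub>R b)) = (*) (H b)"
    using linear_cmul[OF has_derivative_linear[OF assms]] by (auto simp: fun_eq_iff)
  ultimately show ?thesis
    by (simp add: has_field_derivative_def)
qed

lemma difference_quotient_bound: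
  fixes h :: "'a::real_normed_vector \<Rightarrow> real"
  assumes "\<And>y. (h has_derivative H y) (at y)" "\<And>y. \<bar>H y b\<bar> \<le> M" "0 < t"
  shows "\<bar>(h (x + t *\<^sub>R b) - h x) / t\<bar> \<le> M"
proof -
  obtain z where "h (x + t *\<^sub>R b) - h (x + 0 *\<^sub>R b) = (t - 0) * H (x + z *\<^sub>R b) b"
    using MVT2[of 0 t "\<lambda>s. h (x + s *\<^sub>R b)" "\<lambda>s. H (x + s *\<^sub>R b) b"] assms(3)
      has_real_derivative_along_line[OF assms(1)] by blast
  then show ?thesis
    using assms(2)[of "x + z *\<^sub>R b"] assms(3) by simp
qed

text \<open>The difference quotients in direction \<open>b\<close> have integral \<open>0\<close> by translation invariance
  of Lebesgue measure, and converge dominatedly to the partial derivative.\<close>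

lemma integral_partial_derivative_eq_0:
  fixes h :: "'a::euclidean_space \<Rightarrow> real"
  assumes h_deriv: "\<And>x. (h has_derivative H x) (at x)"
    and H_cont: "continuous_on UNIV (\<lambda>x. H x b)"
    and K: "compact K" and h_zero: "\<And>x. x \<notin> K \<Longrightarrow> h x = 0"
  shows "integral\<^sup>L lborel (\<lambda>x. H x b) = 0"
proof -
  have H_zero: "H x b = 0" if "x \<notin> K" for x
    using has_derivative_locally_zero[OF h_deriv, of "- K" x] K that h_zero
    by (simp add: compact_imp_closed open_Compl)
  have h_cont: "continuous_on UNIV h"
    using h_deriv has_derivative_continuous by (blast intro: continuous_at_imp_continuous_on)
  have h_int: "integrable lborel h"
    by (rule integrable_vanishing_outside_compact[OF h_cont K h_zero])
  obtain M where M: "\<And>x. \<bar>H x b\<bar> \<le> M"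
    using bounded_vanishing_outside_compact[OF H_cont K H_zero] by blast
  obtain R where R: "\<And>x. x \<in> K \<Longrightarrow> norm x \<le> R"
    using compact_imp_bounded[OF K] unfolding bounded_iff by auto
  define t where "t n = inverse (real (Suc n))" for n
  have t_pos: "0 < t n" and t_le_1: "t n \<le> 1" for n
    by (auto simp: t_def field_simps)
  define q where "q n x = (h (x + t n *\<^sub>R b) - h x) / t n" for n x
  have "integral\<^sup>L lborel (q n) = 0" for n
    using lborel_integral_translate[OF h_int, of "t n *\<^sub>R b"] h_int
    by (simp add: q_def[abs_def])
  moreover have "(\<lambda>n. integral\<^sup>L lborel (q n)) \<longlonglongrightarrow> integral\<^sup>L lborel (\<lambda>x. H x b)"
  proof (rule integral_dominated_convergence[where w="\<lambda>x. M * indicator (cball 0 (R + norm b)) x"])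
    show "(\<lambda>x. H x b) \<in> borel_measurable lborel"
      using borel_measurable_continuous_onI[OF H_cont] by simp
    have [measurable]: "h \<in> borel_measurable borel"
      by (rule borel_measurable_continuous_onI[OF h_cont])
    show "q n \<in> borel_measurable lborel" for n
      unfolding q_def[abs_def] by measurable
    show "integrable lborel (\<lambda>x. M * indicator (cball 0 (R + norm b)) x)"
      by (intro integrable_mult_right integrable_real_indicator emeasure_bounded_finite) auto
    show "AE x in lborel. (\<lambda>n. q n x) \<longlonglongrightarrow> H x b"
    proof (rule AE_I2)
      fix x
      have "((\<lambda>s. (h (x + s *\<^sub>R b) - h x) / s) \<longlongrightarrow> H x b) (at 0)"
        using has_real_derivative_along_line[of h "H x" x 0 b] h_deriv[of x]
        by (simp add: has_field_derivative_iff)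
      moreover have "filterlim t (at 0) sequentially"
        using t_pos LIMSEQ_inverse_real_of_nat unfolding filterlim_at t_def
        by (auto simp: eventually_sequentially)
      ultimately show "(\<lambda>n. q n x) \<longlonglongrightarrow> H x b"
        unfolding q_def by (rule filterlim_compose)
    qed
    show "AE x in lborel. norm (q n x) \<le> M * indicator (cball 0 (R + norm b)) x" for n
    proof (rule AE_I2)
      fix x
      show "norm (q n x) \<le> M * indicator (cball 0 (R + norm b)) x"
      proof (cases "x \<in> cball 0 (R + norm b)")
        case True
        then show ?thesis
          using difference_quotient_bound[OF h_deriv M t_pos] by (simp add: q_def)
      next
        case False
        have "norm (t n *\<^sub>R b) \<le> norm b"
          using t_pos[of n] t_le_1[of n] by (simp add: mult_left_le_one_le)
        then have "x \<notin> K" "x + t n *\<^sub>R b \<notin> K"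
          using False R[of x] R[of "x + t n *\<^sub>R b"] norm_ge_zero[of b]
            norm_triangle_ineq4[of "x + t n *\<^sub>R b" "t n *\<^sub>R b"]
          by auto
        then show ?thesis
          using False by (simp add: q_def h_zero)
      qed
    qed
  qed
  ultimately show ?thesis
    by (simp add: LIMSEQ_const_iff)
qed

lemma has_derivative_product_vanishing_outside:
  fixes \<phi> :: "'a::real_normed_vector \<Rightarrow> real" and v :: "'a \<Rightarrow> 'b::real_inner"
  assumes K: "closed K" "K \<subseteq> U"
    and \<phi>_deriv: "(\<phi> has_derivative \<phi>') (at x)" and \<phi>_zero: "\<And>y. y \<notin> K \<Longrightarrow> \<phi> y = 0"
    and v_deriv: "x \<in> U \<Longrightarrow> (v has_derivative v') (at x)"
  shows "((\<lambda>y. \<phi> y * (v y \<bullet> b)) has_derivative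
           (\<lambda>w. if x \<in> U then \<phi>' w * (v x \<bullet> b) + \<phi> x * (v' w \<bullet> b) else 0)) (at x)"
proof (cases "x \<in> U")
  case True
  have "((\<lambda>y. \<phi> y * (v y \<bullet> b)) has_derivative (\<lambda>w. \<phi> x * (v' w \<bullet> b) + \<phi>' w * (v x \<bullet> b))) (at x)"
    using has_derivative_mult[OF \<phi>_deriv has_derivative_inner_left[OF v_deriv[OF True]]] .
  moreover have "(\<lambda>w. \<phi> x * (v' w \<bullet> b) + \<phi>' w * (v x \<bullet> b))
      = (\<lambda>w. if x \<in> U then \<phi>' w * (v x \<bullet> b) + \<phi> x * (v' w \<bullet> b) else 0)"
    using True by (simp add: fun_eq_iff)
  ultimately show ?thesis
    by simp
next
  case False
  then have "x \<in> - K"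
    using K(2) by auto
  then have "((\<lambda>y. \<phi> y * (v y \<bullet> b)) has_derivative (\<lambda>w. 0)) (at x)"
    by (intro has_derivative_transform_within_open[OF has_derivative_const[of "0::real"], where s="- K"])
      (use K(1) \<phi>_zero in auto)
  then show ?thesis
    using False by simp
qed

lemma integration_by_parts_test_fun:
  fixes v :: "'a::euclidean_space \<Rightarrow> 'a"
  assumes U: "open U" and \<phi>: "test_fun U \<phi>" and v: "Ck_on 1 U v"
  shows "(LINT x:U|lebesgue. frechet_derivative \<phi> (at x) (v x))
           = - (LINT x:U|lebesgue. \<phi> x * divergence v x)"
proof -
  define K where "K = closure {x. \<phi> x \<noteq> 0}"
  have K: "compact K" "closed K" "K \<subseteq> U"
    using \<phi> by (auto simp: test_fun_def K_def)
  have \<phi>_zero: "\<phi> x = 0" if "x \<notin> K" for x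
    using that closure_subset[of "{x. \<phi> x \<noteq> 0}"] unfolding K_def by auto
  have \<phi>_smooth: "smooth_on UNIV \<phi>"
    using \<phi> by (simp add: test_fun_def)
  note \<phi>_deriv = smooth_on_has_derivative[OF \<phi>_smooth UNIV_I]
  have D\<phi>_zero: "frechet_derivative \<phi> (at x) = (\<lambda>w. 0)" if "x \<notin> K" for x
    using has_derivative_locally_zero[OF \<phi>_deriv, of "- K" x] K(2) that \<phi>_zero by auto
  have v_deriv: "(v has_derivative frechet_derivative v (at x)) (at x)" if "x \<in> U" for x
    using v that by (simp add: frechet_derivative_works[symmetric])
  have v_cont: "continuous_on U v"
    using Ck_on_SucD[of 0 U v] v by simp
  define a where "a b x = (if x \<in> U then frechet_derivative \<phi> (at x) b * (v x \<bullet> b) else 0)" for b x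
  define c where "c b x = (if x \<in> U then \<phi> x * (frechet_derivative v (at x) b \<bullet> b) else 0)" for b x
  define H where "H b x = (\<lambda>w. if x \<in> U then frechet_derivative \<phi> (at x) w * (v x \<bullet> b)
      + \<phi> x * (frechet_derivative v (at x) w \<bullet> b) else 0)" for b x
  have H_deriv: "((\<lambda>x. \<phi> x * (v x \<bullet> b)) has_derivative H b x) (at x)" for b x
    unfolding H_def using K(2,3) \<phi>_deriv \<phi>_zero v_deriv by (rule has_derivative_product_vanishing_outside)
  have a_cont: "continuous_on UNIV (a b)" if b: "b \<in> Basis" for b
  proof (rule continuous_on_UNIV_vanishing_outside[OF U K(2,3)])
    have "continuous_on U (\<lambda>x. frechet_derivative \<phi> (at x) b * (v x \<bullet> b))"
      using continuous_on_subset[OF smooth_on_continuous_on_partial[OF \<phi>_smooth b]] v_cont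
      by (intro continuous_intros) auto
    then show "continuous_on U (a b)"
      by (rule continuous_on_eq) (simp add: a_def)
  qed (simp add: a_def D\<phi>_zero)
  have c_cont: "continuous_on UNIV (c b)" if b: "b \<in> Basis" for b
  proof (rule continuous_on_UNIV_vanishing_outside[OF U K(2,3)])
    have "continuous_on U (\<lambda>x. frechet_derivative v (at x) b)"
      using v b by simp
    then have "continuous_on U (\<lambda>x. \<phi> x * (frechet_derivative v (at x) b \<bullet> b))"
      using continuous_on_subset[OF smooth_on_continuous_on[OF \<phi>_smooth]]
      by (intro continuous_intros) auto
    then show "continuous_on U (c b)"
      by (rule continuous_on_eq) (simp add: c_def)
  qed (simp add: c_def \<phi>_zero)
  have a_int: "integrable lborel (a b)" and c_int: "integrable lborel (c b)" if "b \<in> Basis" for b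
    using that K \<phi>_zero D\<phi>_zero
    by (auto simp: a_def c_def intro!: integrable_vanishing_outside_compact a_cont c_cont)
  have H_eq: "H b x b = a b x + c b x" for b x
    by (simp add: H_def a_def c_def)
  have "(\<Sum>b\<in>Basis. integral\<^sup>L lborel (a b)) + (\<Sum>b\<in>Basis. integral\<^sup>L lborel (c b))
      = (\<Sum>b\<in>Basis. integral\<^sup>L lborel (\<lambda>x. H b x b))"
    unfolding sum.distrib[symmetric] H_eq
    by (intro sum.cong refl Bochner_Integration.integral_add[symmetric] a_int c_int)
  also have "\<dots> = 0"
  proof (rule sum.neutral, rule ballI)
    fix b :: 'a assume b: "b \<in> Basis"
    have "continuous_on UNIV (\<lambda>x. H b x b)"
      unfolding H_eq using a_cont[OF b] c_cont[OF b] by (rule continuous_on_add)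
    then show "integral\<^sup>L lborel (\<lambda>x. H b x b) = 0"
      by (rule integral_partial_derivative_eq_0[OF H_deriv _ K(1)]) (simp add: \<phi>_zero)
  qed
  finally have sum_eq_0: "(\<Sum>b\<in>Basis. integral\<^sup>L lborel (a b)) + (\<Sum>b\<in>Basis. integral\<^sup>L lborel (c b)) = 0" .
  have sum_a: "(\<Sum>b\<in>Basis. a b x) = indicator U x *\<^sub>R frechet_derivative \<phi> (at x) (v x)" for x
  proof -
    have lin: "linear (frechet_derivative \<phi> (at x))"
      using \<phi>_deriv has_derivative_linear by blast
    have "frechet_derivative \<phi> (at x) (v x)
        = frechet_derivative \<phi> (at x) (\<Sum>b\<in>Basis. (v x \<bullet> b) *\<^sub>R b)"
      by (simp add: euclidean_representation)
    also have "\<dots> = (\<Sum>b\<in>Basis. frechet_derivative \<phi> (at x) b * (v x \<bullet> b))"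
      by (simp add: linear_sum[OF lin] linear_cmul[OF lin] mult.commute)
    finally show ?thesis
      by (simp add: a_def indicator_def)
  qed
  have sum_c: "(\<Sum>b\<in>Basis. c b x) = indicator U x *\<^sub>R (\<phi> x * divergence v x)" for x
    by (simp add: c_def indicator_def divergence_def sum_distrib_left)
  have int_sum_a: "integrable lborel (\<lambda>x. \<Sum>b\<in>Basis. a b x)"
    and int_sum_c: "integrable lborel (\<lambda>x. \<Sum>b\<in>Basis. c b x)"
    using a_int c_int by auto
  have "(LINT x:U|lebesgue. frechet_derivative \<phi> (at x) (v x)) = (\<Sum>b\<in>Basis. integral\<^sup>L lborel (a b))"
    using int_sum_a a_int unfolding set_lebesgue_integral_def sum_a[symmetric]
    by (simp add: integral_completion)
  moreover have "(LINT x:U|lebesgue. \<phi> x * divergence v x) = (\<Sum>b\<in>Basis. integral\<^sup>L lborel (c b))"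
    using int_sum_c c_int unfolding set_lebesgue_integral_def sum_c[symmetric]
    by (simp add: integral_completion)
  ultimately show ?thesis
    using sum_eq_0 by linarith
qed

section \<open>Members of the class \<open>L\<close>\<close>

lemma test_fun_continuous: "test_fun U \<phi> \<Longrightarrow> continuous_on UNIV \<phi>"
  by (simp add: test_fun_def smooth_on_continuous_on)

lemma test_fun_bounded:
  assumes \<phi>: "test_fun U \<phi>"
  shows "\<exists>B. \<forall>x. \<bar>\<phi> x\<bar> \<le> B"
proof -
  have K: "compact (closure {x. \<phi> x \<noteq> 0})"
    using \<phi> unfolding test_fun_def by (elim conjE)
  have "\<phi> x = 0" if "x \<notin> closure {x. \<phi> x \<noteq> 0}" for x
    using that closure_subset[of "{x. \<phi> x \<noteq> 0}"] by auto
  then obtain B where "\<And>x. \<bar>\<phi> x\<bar> \<le> B"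
    using bounded_vanishing_outside_compact[OF test_fun_continuous[OF \<phi>] K] by blast
  then show ?thesis
    by blast
qed

lemma finite_measure_density_pos_part:
  fixes g :: "'a \<Rightarrow> real"
  assumes g: "integrable M g"
  shows "finite_measure (density M (\<lambda>x. ennreal (max 0 (g x))))"
proof (rule finite_measureI)
  have [measurable]: "g \<in> borel_measurable M"
    using g by (rule borel_measurable_integrable)
  have "(\<lambda>x. ennreal (max 0 (g x))) \<in> borel_measurable M"
    by measurable
  then have "emeasure (density M (\<lambda>x. ennreal (max 0 (g x)))) (space M)
      = (\<integral>\<^sup>+ x. ennreal (max 0 (g x)) * indicator (space M) x \<partial>M)"
    by (simp add: emeasure_density)
  also have "\<dots> = (\<integral>\<^sup>+ x. ennreal (max 0 (g x)) \<partial>M)"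
    by (intro nn_integral_cong) (simp add: indicator_def)
  also have "\<dots> \<le> (\<integral>\<^sup>+ x. ennreal (norm (g x)) \<partial>M)"
    by (intro nn_integral_mono ennreal_leI) auto
  also have "\<dots> < \<infinity>"
    using g by (simp add: integrable_iff_bounded)
  finally show "emeasure (density M (\<lambda>x. ennreal (max 0 (g x)))) (space (density M (\<lambda>x. ennreal (max 0 (g x))))) \<noteq> \<infinity>"
    by simp
qed

lemma integral_density_pos_part:
  fixes g \<phi> :: "'a \<Rightarrow> real"
  assumes g: "integrable M g" and \<phi>: "\<phi> \<in> borel_measurable M" and \<phi>_bounded: "\<And>x. \<bar>\<phi> x\<bar> \<le> B"
  shows "integrable M (\<lambda>x. max 0 (g x) * \<phi> x)"
    and "(\<integral>x. \<phi> x \<partial>density M (\<lambda>x. ennreal (max 0 (g x)))) = (\<integral>x. max 0 (g x) * \<phi> x \<partial>M)"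
proof -
  have [measurable]: "g \<in> borel_measurable M" "\<phi> \<in> borel_measurable M"
    using g \<phi> by (auto intro: borel_measurable_integrable)
  show "(\<integral>x. \<phi> x \<partial>density M (\<lambda>x. ennreal (max 0 (g x)))) = (\<integral>x. max 0 (g x) * \<phi> x \<partial>M)"
    by (subst integral_density) auto
  show "integrable M (\<lambda>x. max 0 (g x) * \<phi> x)"
  proof (rule Bochner_Integration.integrable_bound[OF integrable_mult_right[OF g, of B]])
    have "\<bar>max 0 (g x)\<bar> \<le> \<bar>g x\<bar>" for x
      by auto
    then show "AE x in M. norm (max 0 (g x) * \<phi> x) \<le> norm (B * g x)"
      using \<phi>_bounded abs_ge_zero
      by (intro AE_I2) (simp add: abs_mult mult_mono' mult.commute order_trans[OF _ abs_ge_self])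
  qed measurable
qed

lemma density_as_difference_of_finite_measures:
  fixes g :: "'a::euclidean_space \<Rightarrow> real"
  assumes U: "open U" and g_cont: "continuous_on U g" and g_int: "set_integrable lebesgue U g"
  obtains \<mu> \<nu> where "finite_measure \<mu>" "finite_measure \<nu>"
    "sets \<mu> = sets (restrict_space borel U)" "sets \<nu> = sets (restrict_space borel U)"
    "\<And>\<phi> B. continuous_on UNIV \<phi> \<Longrightarrow> (\<And>x. \<bar>\<phi> x\<bar> \<le> B) \<Longrightarrow>
       (\<integral>x. \<phi> x \<partial>\<mu>) - (\<integral>x. \<phi> x \<partial>\<nu>) = (LINT x:U|lebesgue. \<phi> x * g x)"
proof -
  define M where "M = restrict_space lborel U"
  have U_borel: "U \<in> sets borel"
    using U by simp
  have sets_M: "sets M = sets (restrict_space borel U)"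
    by (simp add: M_def sets_restrict_space)
  have "integrable lborel (\<lambda>x. indicator U x *\<^sub>R g x)"
    using g_int borel_measurable_continuous_on_indicator[OF U_borel g_cont]
    unfolding set_integrable_def by (simp add: integrable_completion)
  then have g_int_M: "integrable M g" and g_neg_int_M: "integrable M (\<lambda>x. - g x)"
    unfolding M_def using U_borel by (simp_all add: integrable_restrict_space)
  show ?thesis
  proof (rule that[of "density M (\<lambda>x. ennreal (max 0 (g x)))" "density M (\<lambda>x. ennreal (max 0 (- g x)))"])
    show "finite_measure (density M (\<lambda>x. ennreal (max 0 (g x))))"
      "finite_measure (density M (\<lambda>x. ennreal (max 0 (- g x))))"
      using g_int_M g_neg_int_M by (simp_all add: finite_measure_density_pos_part)
    show "sets (density M (\<lambda>x. ennreal (max 0 (g x)))) = sets (restrict_space borel U)"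
      "sets (density M (\<lambda>x. ennreal (max 0 (- g x)))) = sets (restrict_space borel U)"
      by (simp_all add: sets_M)
    fix \<phi> :: "'a \<Rightarrow> real" and B
    assume \<phi>: "continuous_on UNIV \<phi>" "\<And>x. \<bar>\<phi> x\<bar> \<le> B"
    have \<phi>_meas: "\<phi> \<in> borel_measurable M"
      using borel_measurable_continuous_onI[OF \<phi>(1)] unfolding M_def
      by (intro measurable_restrict_space1) simp
    note pos = integral_density_pos_part[OF g_int_M \<phi>_meas \<phi>(2)]
      and neg = integral_density_pos_part[OF g_neg_int_M \<phi>_meas \<phi>(2)]
    have "(\<integral>x. \<phi> x \<partial>density M (\<lambda>x. ennreal (max 0 (g x))))
        - (\<integral>x. \<phi> x \<partial>density M (\<lambda>x. ennreal (max 0 (- g x))))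
        = integral\<^sup>L M (\<lambda>x. max 0 (g x) * \<phi> x - max 0 (- g x) * \<phi> x)"
      using pos neg by simp
    also have "\<dots> = integral\<^sup>L lborel (\<lambda>x. indicator U x *\<^sub>R (\<phi> x * g x))"
      unfolding M_def using U_borel
      by (subst integral_restrict_space) (auto intro!: Bochner_Integration.integral_cong simp: max_def)
    also have "\<dots> = (LINT x:U|lebesgue. \<phi> x * g x)"
      unfolding set_lebesgue_integral_def
      using borel_measurable_continuous_on_indicator[OF U_borel
          continuous_on_mult[OF continuous_on_subset[OF \<phi>(1)] g_cont]]
      by (simp add: integral_completion)
    finally show "(\<integral>x. \<phi> x \<partial>density M (\<lambda>x. ennreal (max 0 (g x))))
        - (\<integral>x. \<phi> x \<partial>density M (\<lambda>x. ennreal (max 0 (- g x)))) = (LINT x:U|lebesgue. \<phi> x * g x)" .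
  qed
qed

lemma L_fieldsI:
  fixes v :: "'a::euclidean_space \<Rightarrow> 'a"
  assumes U: "open U" and v_smooth: "smooth_on U v" and v_bounded: "\<And>x. x \<in> U \<Longrightarrow> norm (v x) \<le> C"
    and div_int: "set_integrable lebesgue U (divergence v)"
    and div_cont: "continuous_on U (divergence v)"
    and div_bounded: "bounded (divergence v ` U)"
  shows "v \<in> L_fields U"
proof -
  obtain \<mu> \<nu> where \<mu>\<nu>: "finite_measure \<mu>" "finite_measure \<nu>"
    "sets \<mu> = sets (restrict_space borel U)" "sets \<nu> = sets (restrict_space borel U)"
    and integral_\<mu>\<nu>: "\<And>\<phi> B. continuous_on UNIV \<phi> \<Longrightarrow> (\<And>x. \<bar>\<phi> x\<bar> \<le> B) \<Longrightarrow>
       (\<integral>x. \<phi> x \<partial>\<mu>) - (\<integral>x. \<phi> x \<partial>\<nu>) = (LINT x:U|lebesgue. \<phi> x * divergence v x)"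
    using density_as_difference_of_finite_measures[OF U div_cont div_int] by blast
  have "(LINT x:U|lebesgue. frechet_derivative \<phi> (at x) (v x)) = - ((\<integral>x. \<phi> x \<partial>\<mu>) - (\<integral>x. \<phi> x \<partial>\<nu>))"
    if \<phi>: "test_fun U \<phi>" for \<phi>
  proof -
    obtain B where "\<And>x. \<bar>\<phi> x\<bar> \<le> B"
      using test_fun_bounded[OF \<phi>] by blast
    then have "(\<integral>x. \<phi> x \<partial>\<mu>) - (\<integral>x. \<phi> x \<partial>\<nu>) = (LINT x:U|lebesgue. \<phi> x * divergence v x)"
      by (rule integral_\<mu>\<nu>[OF test_fun_continuous[OF \<phi>]])
    then show ?thesis
      using integration_by_parts_test_fun[OF U \<phi> smooth_onD[OF v_smooth]] by simp
  qed
  moreover have "v \<in> borel_measurable (restrict_space lebesgue U)"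
    using U by (intro continuous_imp_measurable_on_sets_lebesgue smooth_on_continuous_on[OF v_smooth]) simp
  moreover have "AE x in lebesgue. x \<in> U \<longrightarrow> norm (v x) \<le> C"
    using v_bounded by simp
  ultimately have "DM_inf U v"
    unfolding DM_inf_def using \<mu>\<nu> by blast
  then show ?thesis
    using v_smooth div_int div_cont div_bounded by (simp add: L_fields_def)
qed

section \<open>Cutting off a field outside a ball\<close>

definition cutoff :: "real \<Rightarrow> 'a::euclidean_space \<Rightarrow> real" where
  "cutoff c x = bump 0 (c * (x \<bullet> x))"

definition cutoff_divergence :: "real \<Rightarrow> ('a::euclidean_space \<Rightarrow> 'a) \<Rightarrow> 'a \<Rightarrow> real" where
  "cutoff_divergence c u x = cutoff c x * divergence u x + 2 * c * bump 1 (c * (x \<bullet> x)) * (x \<bullet> u x)"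

lemma divergence_cutoff:
  fixes u :: "'a::euclidean_space \<Rightarrow> 'a"
  assumes "u differentiable at x"
  shows "divergence (\<lambda>y. cutoff c y *\<^sub>R u y) x = cutoff_divergence c u x"
proof -
  have "(cutoff c has_derivative (\<lambda>h. (2 * c * (x \<bullet> h)) * bump 1 (c * (x \<bullet> x)))) (at x)"
    using has_derivative_radial[OF higher_derivatives_bump, of c x] unfolding cutoff_def[abs_def] .
  moreover have "(u has_derivative frechet_derivative u (at x)) (at x)"
    using assms by (simp add: frechet_derivative_works[symmetric])
  ultimately have "((\<lambda>y. cutoff c y *\<^sub>R u y) has_derivative (\<lambda>h. cutoff c x *\<^sub>R frechet_derivative u (at x) h
      + ((2 * c * (x \<bullet> h)) * bump 1 (c * (x \<bullet> x))) *\<^sub>R u x)) (at x)"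
    by (rule has_derivative_scaleR)
  then have "frechet_derivative (\<lambda>y. cutoff c y *\<^sub>R u y) (at x) = (\<lambda>h. cutoff c x *\<^sub>R frechet_derivative u (at x) h
      + ((2 * c * (x \<bullet> h)) * bump 1 (c * (x \<bullet> x))) *\<^sub>R u x)"
    by (rule frechet_derivative_at[symmetric])
  then have "divergence (\<lambda>y. cutoff c y *\<^sub>R u y) x = (\<Sum>b\<in>Basis. cutoff c x * (frechet_derivative u (at x) b \<bullet> b)
      + 2 * c * bump 1 (c * (x \<bullet> x)) * ((x \<bullet> b) * (u x \<bullet> b)))"
    unfolding divergence_def by (intro sum.cong refl) (simp add: inner_add_left algebra_simps)
  also have "\<dots> = cutoff_divergence c u x"
    by (simp add: sum.distrib sum_distrib_left divergence_def cutoff_divergence_def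
        euclidean_inner[of x "u x"])
  finally show ?thesis .
qed

lemma cutoff_bounds: "0 \<le> c \<Longrightarrow> 0 \<le> cutoff c x \<and> cutoff c x \<le> 1"
  unfolding cutoff_def by (rule bump_0_bounds) simp

lemma cutoff_at_0: "cutoff 0 x = 1"
  by (simp add: cutoff_def bump_0_0)

lemma smooth_on_cutoff:
  assumes "open U" "smooth_on U u"
  shows "smooth_on U (\<lambda>x. cutoff c x *\<^sub>R u x)"
  unfolding smooth_on_def
proof
  fix k
  have "Ck_on k U (cutoff c :: 'a \<Rightarrow> real)"
    unfolding cutoff_def[abs_def] by (rule Ck_on_subset[OF Ck_on_radial[OF higher_derivatives_bump]]) simp
  then show "Ck_on k U (\<lambda>x. cutoff c x *\<^sub>R u x)"
    using smooth_onD[OF assms(2)] by (rule Ck_on_scaleR[OF assms(1)])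
qed

lemma cutoff_divergence_eq_0:
  fixes x :: "'a::euclidean_space"
  assumes "0 < c" "max 1 (inverse c) < norm x"
  shows "cutoff_divergence c u x = 0"
proof -
  have "1 < c * norm x"
    using assms by (simp add: field_simps)
  also have "\<dots> \<le> c * (norm x * norm x)"
    using assms by (intro mult_left_mono) (auto simp: mult_le_cancel_left1)
  also have "\<dots> = c * (x \<bullet> x)"
    by (simp add: power2_norm_eq_inner[symmetric] power2_eq_square)
  finally show ?thesis
    by (simp add: cutoff_divergence_def cutoff_def bump_eq_0)
qed

lemma cutoff_divergence_bound:
  fixes x :: "'a::euclidean_space"
  assumes c: "0 < c" "c \<le> 1" and B: "\<And>s. 0 \<le> s \<Longrightarrow> \<bar>bump 1 s\<bar> \<le> B" and u: "norm (u x) \<le> 1"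
  shows "\<bar>cutoff_divergence c u x\<bar> \<le> \<bar>divergence u x\<bar> + 2 * B"
proof (cases "c * (x \<bullet> x) < 1")
  case True
  have c_norm: "c * norm x \<le> 1"
  proof (cases "norm x \<le> 1")
    case True
    then show ?thesis using c by (simp add: mult_le_one)
  next
    case False
    then have "c * norm x \<le> c * (norm x * norm x)"
      using c by (intro mult_left_mono) (auto simp: mult_le_cancel_left1)
    then show ?thesis
      using \<open>c * (x \<bullet> x) < 1\<close> by (simp add: power2_norm_eq_inner[symmetric] power2_eq_square)
  qed
  have inner_le: "\<bar>x \<bullet> u x\<bar> \<le> norm x"
    using Cauchy_Schwarz_ineq2[of x "u x"] u mult_left_le[of "norm (u x)" "norm x"] by simp
  have bump_le: "\<bar>bump 1 (c * (x \<bullet> x))\<bar> \<le> B"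
    using c by (intro B) simp
  have "\<bar>2 * c * bump 1 (c * (x \<bullet> x)) * (x \<bullet> u x)\<bar> = 2 * \<bar>bump 1 (c * (x \<bullet> x))\<bar> * (c * \<bar>x \<bullet> u x\<bar>)"
    using c by (simp add: abs_mult)
  also have "\<dots> \<le> 2 * B * (c * norm x)"
    using bump_le inner_le c by (intro mult_mono mult_left_mono) auto
  also have "\<dots> \<le> 2 * B"
    using c_norm bump_le by (intro mult_left_le) auto
  finally have "\<bar>2 * c * bump 1 (c * (x \<bullet> x)) * (x \<bullet> u x)\<bar> \<le> 2 * B" .
  moreover have "\<bar>cutoff c x * divergence u x\<bar> \<le> \<bar>divergence u x\<bar>"
    using cutoff_bounds[of c x] c by (simp add: abs_mult mult_left_le_one_le)
  ultimately show ?thesis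
    unfolding cutoff_divergence_def by linarith
next
  case False
  then show ?thesis
    using B[of 0] by (simp add: cutoff_divergence_def cutoff_def bump_eq_0)
qed

lemma norm_cutoff_scaleR_le: "0 \<le> c \<Longrightarrow> norm (u x) \<le> 1 \<Longrightarrow> norm (cutoff c x *\<^sub>R u x) \<le> 1"
  using cutoff_bounds[of c x] by (simp add: mult_le_one)

lemma cutoff_divergence_0: "cutoff_divergence 0 u x = divergence u x"
  by (simp add: cutoff_divergence_def cutoff_at_0)

lemma isCont_cutoff_divergence: "isCont (\<lambda>c. cutoff_divergence c u x) c"
  unfolding cutoff_divergence_def cutoff_def
  by (intro continuous_intros isCont_o2[OF _ isCont_bump])

lemma continuous_on_cutoff_divergence:
  assumes "continuous_on U u" "continuous_on U (divergence u)"
  shows "continuous_on U (cutoff_divergence c u)"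
proof -
  have "continuous_on U (\<lambda>x::'a. bump n (c * (x \<bullet> x)))" for n
    by (intro continuous_at_imp_continuous_on ballI continuous_intros isCont_o2[OF _ isCont_bump])
  then show ?thesis
    unfolding cutoff_divergence_def[abs_def] cutoff_def
    by (intro continuous_intros assms)
qed

lemma set_integrable_vanishing_outside_ball:
  fixes d :: "'a::euclidean_space \<Rightarrow> real"
  assumes U: "open U" and d_cont: "continuous_on U d" and K: "\<And>x. x \<in> U \<Longrightarrow> \<bar>d x\<bar> \<le> K"
    and r: "\<And>x. x \<in> U \<Longrightarrow> r < norm x \<Longrightarrow> d x = 0"
  shows "set_integrable lebesgue U d"
  unfolding set_integrable_def
proof (rule Bochner_Integration.integrable_bound)
  show "integrable lebesgue (\<lambda>x. K * indicator (cball (0::'a) r) x)"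
    using emeasure_bounded_finite[OF bounded_cball[of "0::'a" r]]
    by (intro integrable_mult_right integrable_real_indicator) auto
  show "(\<lambda>x. indicator U x *\<^sub>R d x) \<in> borel_measurable lebesgue"
    using borel_measurable_continuous_on_indicator[OF _ d_cont] U
    by (intro measurable_completion) simp
  have "norm (indicator U x *\<^sub>R d x) \<le> norm (K * indicator (cball (0::'a) r) x)" for x
    using K[of x] r[of x] by (cases "x \<in> U"; cases "r < norm x") (auto simp: indicator_def)
  then show "AE x in lebesgue. norm (indicator U x *\<^sub>R d x) \<le> norm (K * indicator (cball 0 r) x)"
    by simp
qed

lemma L_fields_divergence_bounded:
  assumes "u \<in> L_fields U"
  obtains B where "\<And>x. x \<in> U \<Longrightarrow> \<bar>divergence u x\<bar> \<le> B"
  using assms unfolding L_fields_def bounded_iff by fastforce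

lemma L_fields_divergence_cutoff:
  assumes "u \<in> L_fields U" "x \<in> U"
  shows "divergence (\<lambda>y. cutoff c y *\<^sub>R u y) x = cutoff_divergence c u x"
  using assms smooth_onD[of U u 1] by (intro divergence_cutoff) (simp add: L_fields_def)

lemma cutoff_divergence_uniformly_bounded:
  assumes u: "u \<in> L_fields U" and u_le_1: "\<And>x. x \<in> U \<Longrightarrow> norm (u x) \<le> 1"
  obtains K where "\<And>c x. 0 < c \<Longrightarrow> c \<le> 1 \<Longrightarrow> x \<in> U \<Longrightarrow> \<bar>cutoff_divergence c u x\<bar> \<le> K"
proof -
  obtain B where B: "\<And>x. x \<in> U \<Longrightarrow> \<bar>divergence u x\<bar> \<le> B"
    using L_fields_divergence_bounded[OF u] by blast
  obtain B1 where B1: "\<And>s. 0 \<le> s \<Longrightarrow> \<bar>bump 1 s\<bar> \<le> B1"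
    using bump_1_bounded by blast
  have "\<bar>cutoff_divergence c u x\<bar> \<le> B + 2 * B1" if "0 < c" "c \<le> 1" "x \<in> U" for c x
    using cutoff_divergence_bound[where u=u and x=x, OF that(1,2) B1 u_le_1[OF that(3)]] B[OF that(3)]
    by linarith
  then show ?thesis
    using that by blast
qed

lemma set_integrable_cutoff_divergence:
  fixes u :: "'a::euclidean_space \<Rightarrow> 'a"
  assumes U: "open U" and u: "u \<in> L_fields U" and u_le_1: "\<And>x. x \<in> U \<Longrightarrow> norm (u x) \<le> 1"
    and c: "0 < c" "c \<le> 1"
  shows "set_integrable lebesgue U (cutoff_divergence c u)"
proof -
  obtain K where K: "\<And>c x. 0 < c \<Longrightarrow> c \<le> 1 \<Longrightarrow> x \<in> U \<Longrightarrow> \<bar>cutoff_divergence c u x\<bar> \<le> K"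
    using cutoff_divergence_uniformly_bounded[OF u u_le_1] by blast
  have "continuous_on U (cutoff_divergence c u)"
    using u smooth_on_continuous_on[of U u]
    by (intro continuous_on_cutoff_divergence) (auto simp: L_fields_def)
  then show ?thesis
    using K[OF c] cutoff_divergence_eq_0[OF c(1)]
    by (intro set_integrable_vanishing_outside_ball[OF U, where r="max 1 (inverse c)"]) auto
qed

lemma cutoff_in_L_fields:
  fixes u :: "'a::euclidean_space \<Rightarrow> 'a"
  assumes U: "open U" and u: "u \<in> L_fields U" and u_le_1: "\<And>x. x \<in> U \<Longrightarrow> norm (u x) \<le> 1"
    and c: "0 < c" "c \<le> 1"
  shows "(\<lambda>x. cutoff c x *\<^sub>R u x) \<in> L_fields U"
proof (rule L_fieldsI[OF U smooth_on_cutoff[OF U]])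
  note div_eq = L_fields_divergence_cutoff[OF u]
  show "smooth_on U u"
    using u by (simp add: L_fields_def)
  show "norm (cutoff c x *\<^sub>R u x) \<le> 1" if "x \<in> U" for x
    using c u_le_1[OF that] by (intro norm_cutoff_scaleR_le) auto
  have "set_integrable lebesgue U (divergence (\<lambda>x. cutoff c x *\<^sub>R u x))
      = set_integrable lebesgue U (cutoff_divergence c u)"
    by (rule set_integrable_cong) (simp_all add: div_eq)
  then show "set_integrable lebesgue U (divergence (\<lambda>x. cutoff c x *\<^sub>R u x))"
    using set_integrable_cutoff_divergence[OF U u u_le_1 c] by simp
  have "continuous_on U (cutoff_divergence c u)"
    using u smooth_on_continuous_on[of U u]
    by (intro continuous_on_cutoff_divergence) (auto simp: L_fields_def)
  then show "continuous_on U (divergence (\<lambda>x. cutoff c x *\<^sub>R u x))"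
    by (rule continuous_on_eq) (simp add: div_eq)
  obtain K where K: "\<And>c x. 0 < c \<Longrightarrow> c \<le> 1 \<Longrightarrow> x \<in> U \<Longrightarrow> \<bar>cutoff_divergence c u x\<bar> \<le> K"
    using cutoff_divergence_uniformly_bounded[OF u u_le_1] by blast
  have "divergence (\<lambda>x. cutoff c x *\<^sub>R u x) ` U \<subseteq> {- K .. K}"
    using K[OF c] div_eq by (force simp: abs_le_iff)
  then show "bounded (divergence (\<lambda>x. cutoff c x *\<^sub>R u x) ` U)"
    by (rule bounded_subset[OF bounded_closed_interval])
qed

lemma set_integrable_mult_bounded:
  fixes f d :: "'a::euclidean_space \<Rightarrow> real"
  assumes f: "set_integrable lebesgue U f" and d: "set_integrable lebesgue U d"
    and K: "\<And>x. x \<in> U \<Longrightarrow> \<bar>d x\<bar> \<le> K"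
  shows "set_integrable lebesgue U (\<lambda>x. f x * d x)"
  unfolding set_integrable_def
proof (rule Bochner_Integration.integrable_bound)
  show "integrable lebesgue (\<lambda>x. K * \<bar>indicator U x *\<^sub>R f x\<bar>)"
    using f unfolding set_integrable_def by (intro integrable_mult_right integrable_abs)
  have "(\<lambda>x. indicator U x *\<^sub>R (f x * d x)) = (\<lambda>x. (indicator U x *\<^sub>R f x) * (indicator U x *\<^sub>R d x))"
    by (auto simp: indicator_def)
  then show "(\<lambda>x. indicator U x *\<^sub>R (f x * d x)) \<in> borel_measurable lebesgue"
    using f d unfolding set_integrable_def by (simp add: borel_measurable_integrable)
  have bound: "\<bar>indicator U x *\<^sub>R (f x * d x)\<bar> \<le> K * \<bar>indicator U x *\<^sub>R f x\<bar>" for x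
    using K[of x] mult_left_mono[of "\<bar>d x\<bar>" K "\<bar>f x\<bar>"]
    by (cases "x \<in> U") (auto simp: abs_mult mult.commute)
  show "AE x in lebesgue. norm (indicator U x *\<^sub>R (f x * d x)) \<le> norm (K * \<bar>indicator U x *\<^sub>R f x\<bar>)"
  proof (rule AE_I2)
    fix x
    show "norm (indicator U x *\<^sub>R (f x * d x)) \<le> norm (K * \<bar>indicator U x *\<^sub>R f x\<bar>)"
      using bound[of x] abs_ge_self[of "K * \<bar>indicator U x *\<^sub>R f x\<bar>"]
      unfolding real_norm_def by linarith
  qed
qed

lemma tendsto_set_integral_cutoff_divergence:
  fixes u :: "'a::euclidean_space \<Rightarrow> 'a"
  assumes U: "open U" and u: "u \<in> L_fields U" and u_le_1: "\<And>x. x \<in> U \<Longrightarrow> norm (u x) \<le> 1"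
    and f: "set_integrable lebesgue U f"
  shows "(\<lambda>n. LINT x:U|lebesgue. f x * cutoff_divergence (1 / Suc n) u x)
           \<longlonglongrightarrow> (LINT x:U|lebesgue. f x * divergence u x)"
proof -
  define c where "c n = 1 / real (Suc n)" for n
  have c: "0 < c n" "c n \<le> 1" for n
    by (auto simp: c_def field_simps)
  have c_tendsto: "c \<longlonglongrightarrow> 0"
    unfolding c_def by (rule LIMSEQ_Suc[OF lim_1_over_n])
  obtain K where K: "\<And>c x. 0 < c \<Longrightarrow> c \<le> 1 \<Longrightarrow> x \<in> U \<Longrightarrow> \<bar>cutoff_divergence c u x\<bar> \<le> K"
    using cutoff_divergence_uniformly_bounded[OF u u_le_1] by blast
  have "(\<lambda>n. integral\<^sup>L lebesgue (\<lambda>x. indicator U x *\<^sub>R (f x * cutoff_divergence (c n) u x)))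
      \<longlonglongrightarrow> integral\<^sup>L lebesgue (\<lambda>x. indicator U x *\<^sub>R (f x * divergence u x))"
  proof (rule integral_dominated_convergence[where w="\<lambda>x. K * \<bar>indicator U x *\<^sub>R f x\<bar>"])
    obtain B where "\<And>x. x \<in> U \<Longrightarrow> \<bar>divergence u x\<bar> \<le> B"
      using L_fields_divergence_bounded[OF u] by blast
    moreover have "set_integrable lebesgue U (divergence u)"
      using u by (simp add: L_fields_def)
    ultimately show "(\<lambda>x. indicator U x *\<^sub>R (f x * divergence u x)) \<in> borel_measurable lebesgue"
      using set_integrable_mult_bounded[OF f] unfolding set_integrable_def
      by (blast intro: borel_measurable_integrable)
    show "(\<lambda>x. indicator U x *\<^sub>R (f x * cutoff_divergence (c n) u x)) \<in> borel_measurable lebesgue" for n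
      using set_integrable_mult_bounded[OF f set_integrable_cutoff_divergence[OF U u u_le_1 c] K[OF c]]
      unfolding set_integrable_def by (rule borel_measurable_integrable)
    show "integrable lebesgue (\<lambda>x. K * \<bar>indicator U x *\<^sub>R f x\<bar>)"
      using f unfolding set_integrable_def by (intro integrable_mult_right integrable_abs)
    show "AE x in lebesgue. (\<lambda>n. indicator U x *\<^sub>R (f x * cutoff_divergence (c n) u x))
        \<longlonglongrightarrow> indicator U x *\<^sub>R (f x * divergence u x)"
    proof (rule AE_I2)
      fix x
      have "(\<lambda>n. cutoff_divergence (c n) u x) \<longlonglongrightarrow> cutoff_divergence 0 u x"
        by (rule isCont_tendsto_compose[OF isCont_cutoff_divergence c_tendsto])
      then show "(\<lambda>n. indicator U x *\<^sub>R (f x * cutoff_divergence (c n) u x))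
          \<longlonglongrightarrow> indicator U x *\<^sub>R (f x * divergence u x)"
        unfolding cutoff_divergence_0 by (intro tendsto_intros)
    qed
    show "AE x in lebesgue. norm (indicator U x *\<^sub>R (f x * cutoff_divergence (c n) u x))
        \<le> K * \<bar>indicator U x *\<^sub>R f x\<bar>" for n
    proof (rule AE_I2)
      fix x
      show "norm (indicator U x *\<^sub>R (f x * cutoff_divergence (c n) u x)) \<le> K * \<bar>indicator U x *\<^sub>R f x\<bar>"
        using K[OF c, of x] mult_left_mono[of "\<bar>cutoff_divergence (c n) u x\<bar>" K "\<bar>f x\<bar>"]
        by (cases "x \<in> U") (auto simp: abs_mult mult.commute)
    qed
  qed
  then show ?thesis
    unfolding set_lebesgue_integral_def c_def by simp
qed

lemma cutoff_approximation:
  fixes u :: "'a::euclidean_space \<Rightarrow> 'a"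
  assumes U: "open U" and u: "u \<in> L_fields U" and u_le_1: "\<forall>x\<in>U. norm (u x) \<le> 1"
    and f: "set_integrable lebesgue U f" and e: "0 < e"
  obtains v K r where "v \<in> L_fields U" "\<forall>x\<in>U. norm (v x) \<le> 1"
    "\<And>x. x \<in> U \<Longrightarrow> \<bar>divergence v x\<bar> \<le> K"
    "\<And>x. x \<in> U \<Longrightarrow> r < norm x \<Longrightarrow> divergence v x = 0"
    "\<bar>(LINT x:U|lebesgue. f x * divergence v x) - (LINT x:U|lebesgue. f x * divergence u x)\<bar> < e"
proof -
  have u_le_1': "\<And>x. x \<in> U \<Longrightarrow> norm (u x) \<le> 1"
    using u_le_1 by blast
  obtain n where n: "\<bar>(LINT x:U|lebesgue. f x * cutoff_divergence (1 / Suc n) u x)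
      - (LINT x:U|lebesgue. f x * divergence u x)\<bar> < e"
    using LIMSEQ_D[OF tendsto_set_integral_cutoff_divergence[OF U u u_le_1' f] e]
    by (auto simp: dist_real_def)
  define c where "c = 1 / real (Suc n)"
  have c: "0 < c" "c \<le> 1"
    by (auto simp: c_def field_simps)
  obtain K where K: "\<And>c x. 0 < c \<Longrightarrow> c \<le> 1 \<Longrightarrow> x \<in> U \<Longrightarrow> \<bar>cutoff_divergence c u x\<bar> \<le> K"
    using cutoff_divergence_uniformly_bounded[OF u u_le_1'] by blast
  note div_eq = L_fields_divergence_cutoff[OF u, of _ c]
  show ?thesis
  proof (rule that[of "\<lambda>x. cutoff c x *\<^sub>R u x" K "max 1 (inverse c)"])
    show "(\<lambda>x. cutoff c x *\<^sub>R u x) \<in> L_fields U"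
      by (rule cutoff_in_L_fields[OF U u u_le_1' c])
    show "\<forall>x\<in>U. norm (cutoff c x *\<^sub>R u x) \<le> 1"
      using c u_le_1' norm_cutoff_scaleR_le[of c u] by simp
    show "\<bar>divergence (\<lambda>x. cutoff c x *\<^sub>R u x) x\<bar> \<le> K" if "x \<in> U" for x
      using K[OF c that] div_eq[OF that] by simp
    show "divergence (\<lambda>x. cutoff c x *\<^sub>R u x) x = 0" if "x \<in> U" "max 1 (inverse c) < norm x" for x
      using cutoff_divergence_eq_0[OF c(1) that(2)] div_eq[OF that(1)] by simp
    have "(LINT x:U|lebesgue. f x * divergence (\<lambda>x. cutoff c x *\<^sub>R u x) x)
        = (LINT x:U|lebesgue. f x * cutoff_divergence c u x)"
      using U div_eq by (intro set_lebesgue_integral_cong) auto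
    then show "\<bar>(LINT x:U|lebesgue. f x * divergence (\<lambda>x. cutoff c x *\<^sub>R u x) x)
        - (LINT x:U|lebesgue. f x * divergence u x)\<bar> < e"
      using n by (simp add: c_def)
  qed
qed

section \<open>Passing to the limit along the net\<close>

lemma set_integral_mult_diff_le:
  fixes F f d :: "'a::euclidean_space \<Rightarrow> real"
  assumes V: "V \<in> sets lebesgue" "V \<subseteq> U"
    and F: "set_integrable lebesgue U F" and f: "set_integrable lebesgue U f"
    and d: "set_integrable lebesgue U d" and K: "\<And>x. x \<in> U \<Longrightarrow> \<bar>d x\<bar> \<le> K"
    and d_zero: "\<And>x. x \<in> U \<Longrightarrow> x \<notin> V \<Longrightarrow> d x = 0"
  shows "\<bar>(LINT x:U|lebesgue. F x * d x) - (LINT x:U|lebesgue. f x * d x)\<bar>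
           \<le> K * (LINT x:V|lebesgue. \<bar>F x - f x\<bar>)"
proof -
  have Fd: "integrable lebesgue (\<lambda>x. indicator U x *\<^sub>R (F x * d x))"
    and fd: "integrable lebesgue (\<lambda>x. indicator U x *\<^sub>R (f x * d x))"
    using set_integrable_mult_bounded[OF F d] set_integrable_mult_bounded[OF f d] K
    unfolding set_integrable_def by blast+
  have diff_V: "integrable lebesgue (\<lambda>x. indicator V x *\<^sub>R \<bar>F x - f x\<bar>)"
    using set_integrable_subset[OF set_integrable_abs[OF set_integral_diff(1)[OF F f]] V]
    unfolding set_integrable_def .
  have "\<bar>indicator U x *\<^sub>R (F x * d x) - indicator U x *\<^sub>R (f x * d x)\<bar>
      \<le> K * (indicator V x *\<^sub>R \<bar>F x - f x\<bar>)" for x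
  proof (cases "x \<in> V")
    case True
    then have "x \<in> U"
      using V(2) by blast
    moreover have "F x * d x - f x * d x = (F x - f x) * d x"
      by (simp add: left_diff_distrib)
    ultimately show ?thesis
      using True K[of x] mult_left_mono[of "\<bar>d x\<bar>" K "\<bar>F x - f x\<bar>"]
      by (simp add: abs_mult mult.commute)
  next
    case False
    then show ?thesis
      using d_zero[of x] by (cases "x \<in> U") auto
  qed
  then have "\<bar>integral\<^sup>L lebesgue (\<lambda>x. indicator U x *\<^sub>R (F x * d x) - indicator U x *\<^sub>R (f x * d x))\<bar>
      \<le> integral\<^sup>L lebesgue (\<lambda>x. K * (indicator V x *\<^sub>R \<bar>F x - f x\<bar>))"
    using Fd fd diff_V by (intro integral_abs_bound_integral) auto
  then show ?thesis
    using Fd fd unfolding set_lebesgue_integral_def by simp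
qed

lemma net_set_integral_mult_converges:
  fixes F :: "'i \<Rightarrow> 'a::euclidean_space \<Rightarrow> real"
  assumes conv: "\<forall>V. V \<subseteq> U \<and> bounded V \<longrightarrow>
           (\<forall>e>0. \<exists>\<alpha>\<in>I. \<forall>\<beta>\<in>I. R \<alpha> \<beta> \<longrightarrow> (LINT x:V|lebesgue. \<bar>F \<beta> x - f x\<bar>) < e)"
    and U: "open U" and F: "\<forall>\<alpha>\<in>I. set_integrable lebesgue U (F \<alpha>)"
    and f: "set_integrable lebesgue U f" and d: "set_integrable lebesgue U d"
    and K: "\<And>x. x \<in> U \<Longrightarrow> \<bar>d x\<bar> \<le> K" and d_zero: "\<And>x. x \<in> U \<Longrightarrow> r < norm x \<Longrightarrow> d x = 0"
    and e: "0 < e"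
  shows "\<exists>\<alpha>\<in>I. \<forall>\<beta>\<in>I. R \<alpha> \<beta> \<longrightarrow>
           \<bar>(LINT x:U|lebesgue. F \<beta> x * d x) - (LINT x:U|lebesgue. f x * d x)\<bar> < e"
proof -
  define V where "V = U \<inter> cball 0 r"
  define K' where "K' = \<bar>K\<bar> + 1"
  have V: "V \<in> sets lebesgue" "V \<subseteq> U" "bounded V"
    using U by (auto simp: V_def intro: bounded_subset[OF bounded_cball])
  have K': "0 < K'" "\<And>x. x \<in> U \<Longrightarrow> \<bar>d x\<bar> \<le> K'"
    using K by (force simp: K'_def)+
  obtain \<alpha> where "\<alpha> \<in> I" and \<alpha>: "\<And>\<beta>. \<beta> \<in> I \<Longrightarrow> R \<alpha> \<beta> \<Longrightarrow> (LINT x:V|lebesgue. \<bar>F \<beta> x - f x\<bar>) < e / K'"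
    using conv V(2,3) e K'(1) by (meson divide_pos_pos)
  have "\<bar>(LINT x:U|lebesgue. F \<beta> x * d x) - (LINT x:U|lebesgue. f x * d x)\<bar> < e"
    if "\<beta> \<in> I" "R \<alpha> \<beta>" for \<beta>
  proof -
    have "\<bar>(LINT x:U|lebesgue. F \<beta> x * d x) - (LINT x:U|lebesgue. f x * d x)\<bar>
        \<le> K' * (LINT x:V|lebesgue. \<bar>F \<beta> x - f x\<bar>)"
      using F that(1) d_zero by (intro set_integral_mult_diff_le[OF V(1,2) _ f d K'(2)]) (auto simp: V_def)
    also have "\<dots> < K' * (e / K')"
      using \<alpha>[OF that] K'(1) by (intro mult_strict_left_mono)
    finally show ?thesis
      using K'(1) by simp
  qed
  then show ?thesis
    using \<open>\<alpha> \<in> I\<close> by blast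
qed

lemma ereal_le_net_liminfI:
  assumes "\<And>e. 0 < e \<Longrightarrow> \<exists>\<alpha>\<in>I. \<forall>\<beta>\<in>I. R \<alpha> \<beta> \<longrightarrow> ereal (a - e) \<le> x \<beta>"
  shows "ereal a \<le> net_liminf I R x"
proof (rule ereal_le_epsilon2)
  fix e :: real
  assume "0 < e"
  then obtain \<alpha> where "\<alpha> \<in> I" and \<alpha>: "\<forall>\<beta>\<in>I. R \<alpha> \<beta> \<longrightarrow> ereal (a - e) \<le> x \<beta>"
    using assms by blast
  then have "ereal (a - e) \<le> (INF \<beta>\<in>{b\<in>I. R \<alpha> b}. x \<beta>)"
    by (auto intro: INF_greatest)
  also have "\<dots> \<le> net_liminf I R x"
    unfolding net_liminf_def using \<open>\<alpha> \<in> I\<close> by (rule SUP_upper)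
  finally have "ereal (a - e) + ereal e \<le> net_liminf I R x + ereal e"
    by (rule add_right_mono)
  then show "ereal a \<le> net_liminf I R x + ereal e"
    by simp
qed

lemma BF_norm_ge:
  assumes "v \<in> L_fields U" "\<forall>x\<in>U. norm (v x) \<le> 1"
  shows "ereal (LINT x:U|lebesgue. g x * divergence v x) \<le> BF_norm U g"
  unfolding BF_norm_def using assms by (intro SUP_upper) auto

lemma set_integral_divergence_le_net_liminf:
  fixes F :: "'i \<Rightarrow> 'a::euclidean_space \<Rightarrow> real"
  assumes conv: "\<forall>V. V \<subseteq> U \<and> bounded V \<longrightarrow>
           (\<forall>e>0. \<exists>\<alpha>\<in>I. \<forall>\<beta>\<in>I. R \<alpha> \<beta> \<longrightarrow> (LINT x:V|lebesgue. \<bar>F \<beta> x - f x\<bar>) < e)"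
    and U: "open U" and F: "\<forall>\<alpha>\<in>I. set_integrable lebesgue U (F \<alpha>)"
    and f: "set_integrable lebesgue U f"
    and u: "u \<in> L_fields U" and u_le_1: "\<forall>x\<in>U. norm (u x) \<le> 1"
  shows "ereal (LINT x:U|lebesgue. f x * divergence u x) \<le> net_liminf I R (\<lambda>\<alpha>. BF_norm U (F \<alpha>))"
proof (rule ereal_le_net_liminfI)
  fix e :: real
  assume e: "0 < e"
  then obtain v K r where v: "v \<in> L_fields U" "\<forall>x\<in>U. norm (v x) \<le> 1"
    and K: "\<And>x. x \<in> U \<Longrightarrow> \<bar>divergence v x\<bar> \<le> K"
    and r: "\<And>x. x \<in> U \<Longrightarrow> r < norm x \<Longrightarrow> divergence v x = 0"
    and close: "\<bar>(LINT x:U|lebesgue. f x * divergence v x) - (LINT x:U|lebesgue. f x * divergence u x)\<bar> < e / 2"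
    using cutoff_approximation[OF U u u_le_1 f, of "e / 2"] by auto
  have div_int: "set_integrable lebesgue U (divergence v)"
    using v(1) by (simp add: L_fields_def)
  obtain \<alpha> where "\<alpha> \<in> I" and \<alpha>: "\<forall>\<beta>\<in>I. R \<alpha> \<beta> \<longrightarrow>
      \<bar>(LINT x:U|lebesgue. F \<beta> x * divergence v x) - (LINT x:U|lebesgue. f x * divergence v x)\<bar> < e / 2"
    using net_set_integral_mult_converges[OF conv U F f div_int K r, where e="e / 2"] e by auto
  have "ereal ((LINT x:U|lebesgue. f x * divergence u x) - e) \<le> BF_norm U (F \<beta>)"
    if "\<beta> \<in> I" "R \<alpha> \<beta>" for \<beta>
  proof -
    have "(LINT x:U|lebesgue. f x * divergence u x) - e \<le> (LINT x:U|lebesgue. F \<beta> x * divergence v x)"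
      using \<alpha>[rule_format, OF that] close unfolding abs_less_iff by linarith
    then have "ereal ((LINT x:U|lebesgue. f x * divergence u x) - e)
        \<le> ereal (LINT x:U|lebesgue. F \<beta> x * divergence v x)"
      by simp
    also have "\<dots> \<le> BF_norm U (F \<beta>)"
      by (rule BF_norm_ge[OF v])
    finally show ?thesis .
  qed
  then show "\<exists>\<alpha>\<in>I. \<forall>\<beta>\<in>I. R \<alpha> \<beta> \<longrightarrow>
      ereal ((LINT x:U|lebesgue. f x * divergence u x) - e) \<le> BF_norm U (F \<beta>)"
    using \<open>\<alpha> \<in> I\<close> by blast
qed

theorem proposition3p11:
  fixes U :: "'a::euclidean_space set"
    and I :: "'i set" and R :: "'i \<Rightarrow> 'i \<Rightarrow> bool"
    and F :: "'i \<Rightarrow> 'a \<Rightarrow> real" and f :: "'a \<Rightarrow> real"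
  assumes "open U"
    and "directed_set I R"
    and "\<forall>\<alpha>\<in>I. set_integrable lebesgue U (F \<alpha>)"
    and "set_integrable lebesgue U f"
    and "\<forall>V. V \<subseteq> U \<and> bounded V \<longrightarrow>
           (\<forall>e>0. \<exists>\<alpha>\<in>I. \<forall>\<beta>\<in>I. R \<alpha> \<beta> \<longrightarrow>
              (LINT x:V|lebesgue. \<bar>F \<beta> x - f x\<bar>) < e)"
  shows "BF_norm U f \<le> net_liminf I R (\<lambda>\<alpha>. BF_norm U (F \<alpha>))"
  unfolding BF_norm_def[of U f]
  using set_integral_divergence_le_net_liminf[OF assms(5,1,3,4)] by (intro SUP_least) auto

end
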